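(* For every integer $n>2$, the Euclidean space $\mathbb R^n$ is strongly discrete homogeneous.
   Context: A subset $D$ of $X$ is discrete if each point of $X$ has a neighbourhood containing at most one point of $D$. A Hausdorff space $X$ is strongly discrete homogeneous (sDH) if for any two discrete subsets $A,B$ of $X$ and any bijection $f\colon A\to B$, $f$ extends to a homeomorphism of $X$ onto itself. *)

theory Defs
  imports "HOL-Analysis.Analysis"
begin

definition discrete_subset :: "'a::topological_space set \<Rightarrow> bool" where
  "discrete_subset D \<longleftrightarrow>
     (\<forall>x. \<exists>U. open U \<and> x \<in> U \<and> (\<forall>a\<in>U \<inter> D. \<forall>b\<in>U \<inter> D. a = b))"

definition strongly_discrete_homogeneous :: "'a::t2_space itself \<Rightarrow> bool" where
  "strongly_discrete_homogeneous _ \<longleftrightarrow>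
     (\<forall>(A::'a set) (B::'a set) f. discrete_subset A \<and> discrete_subset B \<and> bij_betw f A B \<longrightarrow>
        (\<exists>h g. homeomorphism (UNIV::'a set) (UNIV::'a set) h g \<and> (\<forall>x\<in>A. h x = f x)))"

end

theory Submission
  imports Defs
begin

text \<open>A back-and-forth construction. A stage is a homeomorphism \<open>h\<close> of the space together with a
  compact set \<open>K\<close> with connected complement on which \<open>h\<close> agrees with \<open>f\<close> and pulls \<open>B\<close> back
  into \<open>A\<close>. A discrete set meets each ball in finitely many points and is closed and countable,
  and in dimension at least two removing a countable closed set from a connected open set keeps
  it connected. So, away from \<open>K\<close>, a homeomorphism moving finitely many points can carry the
  points of \<open>A\<close> in a large ball to their images and push all other points of \<open>h\<^sup>-\<^sup>1(B)\<close> in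
  that ball outside it. Alternating this for \<open>f\<close> and \<open>f\<^sup>-\<^sup>1\<close> yields stages whose domains and
  ranges both exhaust the space; their limit is a homeomorphism extending \<open>f\<close>.\<close>

lemma discrete_subset_not_islimpt:
  fixes D :: "'a::t1_space set"
  assumes "discrete_subset D"
  shows "\<not> x islimpt D"
proof
  assume limpt: "x islimpt D"
  obtain U where U: "open U" "x \<in> U" and sub: "\<forall>a\<in>U \<inter> D. \<forall>b\<in>U \<inter> D. a = b"
    using assms unfolding discrete_subset_def by blast
  have "finite (U \<inter> D)"
  proof (cases "U \<inter> D = {}")
    case False
    then obtain a where "a \<in> U \<inter> D" by blast
    then have "U \<inter> D \<subseteq> {a}" using sub by blast
    then show ?thesis by (rule finite_subset) simp
  qed simp
  define T where "T = U - (U \<inter> D - {x})"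
  have "open T"
    using \<open>finite (U \<inter> D)\<close> U(1) by (simp add: T_def finite_imp_closed open_Diff)
  moreover have "x \<in> T"
    using U(2) by (simp add: T_def)
  ultimately obtain y where "y \<in> D" "y \<in> T" "y \<noteq> x"
    using islimptE[OF limpt] by blast
  then show False by (simp add: T_def)
qed

lemma finite_discrete_subset_Int_compact:
  fixes D :: "'a::t1_space set"
  assumes "discrete_subset D" "compact C"
  shows "finite (D \<inter> C)"
  using Heine_Borel_imp_Bolzano_Weierstrass[OF assms(2), of "D \<inter> C"]
    discrete_subset_not_islimpt[OF assms(1)] islimpt_subset by blast

lemma closed_subset_discrete_subset:
  fixes D :: "'a::t1_space set"
  assumes "discrete_subset D" "E \<subseteq> D"
  shows "closed E"
  using discrete_subset_not_islimpt[OF assms(1)] islimpt_subset[OF _ assms(2)]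
  by (auto simp: closed_limpt)

lemma countable_discrete_subset:
  fixes D :: "'a::{heine_borel, real_normed_vector} set"
  assumes "discrete_subset D"
  shows "countable D"
proof -
  have "D = (\<Union>k::nat. D \<inter> cball 0 (real k))"
    by (auto simp: dist_norm) (meson real_arch_simple)
  moreover have "countable (D \<inter> cball 0 (real k))" for k
    using finite_discrete_subset_Int_compact[OF assms compact_cball] by (simp add: countable_finite)
  ultimately show ?thesis
    by (metis countable_UN countableI_type)
qed

lemma discrete_subset_homeomorphic_image:
  assumes "discrete_subset D" "homeomorphism UNIV UNIV h g"
  shows "discrete_subset (h ` D)"
  unfolding discrete_subset_def
proof
  fix x
  obtain U where U: "open U" "g x \<in> U" "\<forall>a\<in>U \<inter> D. \<forall>b\<in>U \<inter> D. a = b"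
    using assms(1) unfolding discrete_subset_def by metis
  have g_cont: "continuous_on UNIV g" and hg: "\<And>y. h (g y) = y" and gh: "\<And>x. g (h x) = x"
    using assms(2) unfolding homeomorphism_def by auto
  have "\<forall>a\<in>g -` U \<inter> h ` D. \<forall>b\<in>g -` U \<inter> h ` D. a = b"
  proof (intro ballI)
    fix a b assume "a \<in> g -` U \<inter> h ` D" "b \<in> g -` U \<inter> h ` D"
    then have "g a \<in> U \<inter> D" "g b \<in> U \<inter> D" "a = h (g a)" "b = h (g b)"
      using gh hg by auto
    then show "a = b"
      using U(3) by metis
  qed
  moreover have "open (g -` U)"
    using open_vimage[OF U(1) g_cont] .
  ultimately show "\<exists>V. open V \<and> x \<in> V \<and> (\<forall>a\<in>V \<inter> h ` D. \<forall>b\<in>V \<inter> h ` D. a = b)"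
    using U(2) by blast
qed

lemma open_connected_Compl_diff_discrete_subset:
  fixes K :: "'a::euclidean_space set"
  assumes "2 \<le> DIM('a)" "closed K" "connected (- K)" "discrete_subset D" "E \<subseteq> D"
  shows "open (- K - E)" "connected (- K - E)"
proof -
  have "closed E" "countable E"
    using assms(4,5) closed_subset_discrete_subset countable_discrete_subset countable_subset
    by blast+
  then show "open (- K - E)" "connected (- K - E)"
    using assms(1-3) connected_open_diff_countable[OF assms(1), of "- K" E]
    by (auto simp: open_Compl open_Diff)
qed

lemma uncountable_Compl_cball:
  fixes a :: "'a::euclidean_space"
  shows "uncountable (- cball a r)"
proof -
  obtain v :: 'a where v: "norm v = 1"
    using norm_Basis SOME_Basis by blast
  define c where "c = a + (\<bar>r\<bar> + 2) *\<^sub>R v"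
  have "ball c 1 \<subseteq> - cball a r"
  proof
    fix y assume "y \<in> ball c 1"
    then have "\<bar>r\<bar> + 2 - 1 < dist a y"
      using dist_triangle2[of a c y] v by (simp add: c_def dist_norm)
    then show "y \<in> - cball a r" by simp
  qed
  then show ?thesis
    using uncountable_ball[of 1 c] countable_subset by auto
qed

lemma finite_inj_into_infinite:
  assumes "finite A" "infinite B"
  obtains q where "inj_on q A" "q ` A \<subseteq> B"
proof -
  obtain e :: "nat \<Rightarrow> _" where e: "inj e" "range e \<subseteq> B"
    using infinite_countable_subset[OF assms(2)] by blast
  obtain c :: "_ \<Rightarrow> nat" where c: "inj_on c A"
    using finite_imp_inj_to_nat_seg[OF assms(1)] by blast
  show thesis
  proof (rule that[of "e \<circ> c"])
    show "inj_on (e \<circ> c) A"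
      using e(1) c by (auto simp: inj_on_def)
    show "(e \<circ> c) ` A \<subseteq> B"
      using e(2) by auto
  qed
qed

lemma inj_on_extend_inverse:
  assumes E: "finite E" "f ` X \<subseteq> E" and inj: "inj_on f X" and F: "infinite F"
  obtains src where "inj_on src E" "\<And>x. x \<in> X \<Longrightarrow> src (f x) = x"
    "\<And>d. d \<in> E - f ` X \<Longrightarrow> src d \<in> F - X"
proof -
  have "finite X"
    using E inj finite_imageD finite_subset by blast
  then have "infinite (F - X)"
    using F by (simp add: Diff_infinite_finite)
  then obtain q where q: "inj_on q (E - f ` X)" "q ` (E - f ` X) \<subseteq> F - X"
    using finite_inj_into_infinite[OF finite_Diff[OF E(1)]] by blast
  define src where "src d = (if d \<in> f ` X then inv_into X f d else q d)" for d
  have src_f: "src (f x) = x" if "x \<in> X" for x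
    using that inj by (simp add: src_def)
  have src_q: "src d = q d" if "d \<notin> f ` X" for d
    using that by (simp add: src_def)
  have "inj_on src E"
  proof (rule inj_onI)
    fix d d' assume dd': "d \<in> E" "d' \<in> E" "src d = src d'"
    show "d = d'"
    proof (cases "d \<in> f ` X"; cases "d' \<in> f ` X")
      assume "d \<in> f ` X" "d' \<in> f ` X"
      then show ?thesis using src_f dd'(3) by auto
    next
      assume "d \<notin> f ` X" "d' \<notin> f ` X"
      then show ?thesis using q(1) dd' src_q by (simp add: inj_on_def)
    next
      assume "d \<in> f ` X" "d' \<notin> f ` X"
      then show ?thesis using src_f src_q q(2) dd' by fastforce
    next
      assume "d \<notin> f ` X" "d' \<in> f ` X"
      then show ?thesis using src_f src_q q(2) dd' by fastforce
    qed
  qed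
  then show thesis
    using that src_f src_q q(2) by blast
qed

lemma homeomorphism_moving_points_into:
  fixes S :: "'a::euclidean_space set"
  assumes "2 \<le> DIM('a)" "open S" "connected S" "finite E" "E \<subseteq> S" "inj_on src E" "src ` E \<subseteq> S"
  obtains \<psi> \<psi>' where "homeomorphism UNIV UNIV \<psi> \<psi>'" "\<And>d. d \<in> E \<Longrightarrow> \<psi> (src d) = d"
    "\<And>x. x \<notin> S \<Longrightarrow> \<psi> x = x" "\<And>x. x \<in> S \<Longrightarrow> \<psi> x \<in> S"
proof (cases "S = {}")
  case True
  then show thesis
    using that[of id id] assms(5) homeomorphism_ident[folded id_def] by auto
next
  case False
  then have aff: "UNIV \<subseteq> affine hull S"
    using affine_hull_open[OF assms(2)] by simp
  have in_S: "\<And>d. d \<in> E \<Longrightarrow> src d \<in> S \<and> id d \<in> S"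
    using assms(5,7) by auto
  have distinct: "pairwise (\<lambda>i j. src i \<noteq> src j \<and> id i \<noteq> id j) E"
    using assms(6) by (auto simp: pairwise_def inj_on_def)
  obtain \<psi> \<psi>' where \<psi>: "homeomorphism UNIV UNIV \<psi> \<psi>'" "\<And>d. d \<in> E \<Longrightarrow> \<psi> (src d) = id d"
    "{x. \<not> (\<psi> x = x \<and> \<psi>' x = x)} \<subseteq> S"
  proof (rule homeomorphism_moving_points_exists[of S UNIV E src id,
        OF assms(1-3) subset_UNIV assms(4) in_S distinct subset_UNIV aff assms(3)])
    fix \<phi> \<phi>' assume "homeomorphism UNIV UNIV \<phi> \<phi>'" "\<And>d. d \<in> E \<Longrightarrow> \<phi> (src d) = id d"
      "{x. \<not> (\<phi> x = x \<and> \<phi>' x = x)} \<subseteq> S"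
    then show thesis by (rule that)
  qed
  have "\<psi>' (\<psi> x) = x" for x
    using \<psi>(1) by (simp add: homeomorphism_def)
  then have "\<psi> x \<in> S" if "x \<in> S" for x
    using \<psi>(3) that by (metis (mono_tags, lifting) mem_Collect_eq subsetD)
  moreover have "\<psi> x = x" if "x \<notin> S" for x
    using \<psi>(3) that by blast
  ultimately show thesis
    using that \<psi>(1,2) by simp
qed

text \<open>The second clause (no point of \<open>K\<close> outside \<open>A\<close> is sent into \<open>B\<close>) makes the notion
  symmetric under passing to inverses, which the back-and-forth construction relies on.\<close>

definition matches_on :: "'a set \<Rightarrow> 'b set \<Rightarrow> ('a \<Rightarrow> 'b) \<Rightarrow> ('a \<Rightarrow> 'b) \<Rightarrow> 'a set \<Rightarrow> bool" where
  "matches_on A B f h K \<longleftrightarrow> (\<forall>x\<in>K. (x \<in> A \<longrightarrow> h x = f x) \<and> (h x \<in> B \<longrightarrow> x \<in> A))"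

lemma matches_on_comp_iff:
  assumes "\<And>x. g (h x) = x" "\<And>y. h (g y) = y"
  shows "matches_on A B f (h \<circ> \<phi>) K \<longleftrightarrow> matches_on A (g ` B) (g \<circ> f) \<phi> K"
  unfolding matches_on_def using assms by (auto simp: image_iff) metis+

lemma matches_on_inverse:
  assumes gh: "\<And>x. g (h x) = x" and bij: "bij_betw f A B" and match: "matches_on A B f h K"
  shows "matches_on B A (inv_into A f) g (h ` K)"
  unfolding matches_on_def
proof (intro ballI conjI impI)
  fix y assume "y \<in> h ` K"
  then obtain x where x: "x \<in> K" "y = h x" by blast
  show "g y = inv_into A f y" if "y \<in> B"
  proof -
    have "x \<in> A" "h x = f x"
      using match x that unfolding matches_on_def by auto
    then show ?thesis
      using bij x(2) gh by (metis bij_betw_imp_inj_on inv_into_f_f)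
  qed
  show "y \<in> B" if "g y \<in> A"
  proof -
    have "x \<in> A"
      using that x gh by simp
    then have "h x = f x"
      using match x(1) unfolding matches_on_def by blast
    then show ?thesis
      using x(2) \<open>x \<in> A\<close> bij by (auto simp: bij_betw_def)
  qed
qed

lemma matches_on_id_image_disjoint:
  assumes match: "matches_on A D f id K" and inj: "inj_on f A" and fAD: "f ` A \<subseteq> D"
  shows "f ` (A - K) \<inter> K = {}"
proof (rule ccontr)
  assume "f ` (A - K) \<inter> K \<noteq> {}"
  then obtain x where x: "x \<in> A" "x \<notin> K" "f x \<in> K" by auto
  then have "f x \<in> A" "f (f x) = f x"
    using match fAD unfolding matches_on_def by auto
  then have "f x = x"
    using inj x(1) by (auto simp: inj_on_def)
  then show False using x by simp
qed

text \<open>Inside the connected open set \<open>S\<close>, obtained by removing \<open>K\<close> and the far points of \<open>D\<close>,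
  the finitely many points \<open>X\<close> of \<open>A\<close> in the ball are moved onto their images, and the
  other points of \<open>D\<close> in \<open>S\<close> receive fresh preimages outside the ball.\<close>

lemma matches_on_extend_to_cball:
  fixes f :: "'a::euclidean_space \<Rightarrow> 'a"
  assumes dim: "2 \<le> DIM('a)" and dA: "discrete_subset A" and dD: "discrete_subset D"
    and inj: "inj_on f A" and fAD: "f ` A \<subseteq> D"
    and K: "compact K" "connected (- K)" "K \<subseteq> cball 0 \<rho>" and match: "matches_on A D f id K"
  obtains \<psi> \<psi>' where "homeomorphism UNIV UNIV \<psi> \<psi>'" "\<forall>x\<in>K. \<psi> x = x"
    "matches_on A D f \<psi> (cball 0 \<rho>)"
proof -
  define X where "X = A \<inter> cball 0 \<rho> - K"
  define S where "S = - K - (D - (f ` X \<union> cball 0 \<rho>))"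
  define E where "E = D \<inter> S"
  have S: "open S" "connected S"
    unfolding S_def using open_connected_Compl_diff_discrete_subset[OF dim _ K(2) dD]
      compact_imp_closed[OF K(1)] by auto
  have "finite X"
    using finite_discrete_subset_Int_compact[OF dA compact_cball] by (simp add: X_def Diff_Int2)
  have finE: "finite E"
  proof (rule finite_subset)
    show "E \<subseteq> f ` X \<union> D \<inter> cball 0 \<rho>"
      by (auto simp: E_def S_def)
    show "finite (f ` X \<union> D \<inter> cball 0 \<rho>)"
      using \<open>finite X\<close> finite_discrete_subset_Int_compact[OF dD compact_cball] by simp
  qed
  have fX_E: "f ` X \<subseteq> E"
    using matches_on_id_image_disjoint[OF match inj fAD] fAD by (auto simp: X_def E_def S_def)
  have "inj_on f X"
    using inj by (rule inj_on_subset) (auto simp: X_def)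
  moreover have "uncountable (- cball 0 \<rho> - D)"
    using uncountable_Compl_cball countable_discrete_subset[OF dD] uncountable_minus_countable by blast
  then have "infinite (- cball 0 \<rho> - D)"
    using countable_finite by blast
  ultimately obtain src where src: "inj_on src E" "\<And>x. x \<in> X \<Longrightarrow> src (f x) = x"
    "\<And>d. d \<in> E - f ` X \<Longrightarrow> src d \<in> - cball 0 \<rho> - D - X"
    using inj_on_extend_inverse[OF finE fX_E] by blast
  have "E \<subseteq> S"
    by (simp add: E_def)
  moreover have "src ` E \<subseteq> S"
    using src(2,3) K(3) by (fastforce simp: X_def S_def)
  ultimately obtain \<psi> \<psi>' where \<psi>: "homeomorphism UNIV UNIV \<psi> \<psi>'" "\<And>d. d \<in> E \<Longrightarrow> \<psi> (src d) = d"
    "\<And>x. x \<notin> S \<Longrightarrow> \<psi> x = x" "\<And>x. x \<in> S \<Longrightarrow> \<psi> x \<in> S"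
    using homeomorphism_moving_points_into[OF dim S finE _ src(1)] by blast
  have \<psi>_K: "\<psi> x = x" if "x \<in> K" for x
    using \<psi>(3) that by (simp add: S_def)
  have "matches_on A D f \<psi> (cball 0 \<rho>)"
    unfolding matches_on_def
  proof (intro ballI conjI impI)
    fix w :: 'a assume w: "w \<in> cball 0 \<rho>"
    show "\<psi> w = f w" if "w \<in> A"
    proof (cases "w \<in> K")
      case True
      then show ?thesis using \<psi>_K match that by (simp add: matches_on_def)
    next
      case False
      then have "w \<in> X"
        using w that by (simp add: X_def)
      then show ?thesis
        using \<psi>(2) src(2) fX_E by (metis image_eqI subsetD)
    qed
    show "w \<in> A" if "\<psi> w \<in> D"
    proof (cases "w \<in> K")
      case True
      then show ?thesis using \<psi>_K match that by (simp add: matches_on_def)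
    next
      case False
      then have "w \<in> S"
        using w by (simp add: S_def)
      then have "\<psi> w \<in> E"
        using \<psi>(4) that by (simp add: E_def)
      moreover have "inj \<psi>"
        using \<psi>(1) by (metis homeomorphism_def inj_on_inverseI)
      ultimately have w_src: "w = src (\<psi> w)"
        using \<psi>(2) by (metis injD)
      show ?thesis
      proof (cases "\<psi> w \<in> f ` X")
        case True
        then show ?thesis using src(2) w_src by (auto simp: X_def)
      next
        case False
        then show ?thesis using src(3)[of "\<psi> w"] \<open>\<psi> w \<in> E\<close> w_src w by simp
      qed
    qed
  qed
  then show thesis
    using that \<psi>(1) \<psi>_K by blast
qed

definition extension_stage ::
    "'a set \<Rightarrow> 'a set \<Rightarrow> ('a \<Rightarrow> 'a) \<Rightarrow> ('a::topological_space \<Rightarrow> 'a) \<Rightarrow> ('a \<Rightarrow> 'a) \<Rightarrow> 'a set \<Rightarrow> bool"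
  where "extension_stage A B f h g K \<longleftrightarrow>
    homeomorphism UNIV UNIV h g \<and> compact K \<and> connected (- K) \<and> matches_on A B f h K"

lemma extension_stage_inverse:
  assumes "extension_stage A B f h g K" "bij_betw f A B"
  shows "extension_stage B A (inv_into A f) g h (h ` K)"
proof -
  have hom: "homeomorphism UNIV UNIV h g" and K: "compact K" "connected (- K)"
    and match: "matches_on A B f h K"
    using assms(1) by (auto simp: extension_stage_def)
  have gh: "\<And>x. g (h x) = x" and hg: "\<And>y. h (g y) = y" and h_cont: "continuous_on UNIV h"
    using hom by (auto simp: homeomorphism_def)
  have "compact (h ` K)"
    using compact_continuous_image[OF continuous_on_subset[OF h_cont] K(1)] by simp
  moreover have "bij h"
    using gh hg by (intro bij_betw_byWitness[where f' = g]) auto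
  then have "connected (- (h ` K))"
    using connected_continuous_image[OF continuous_on_subset[OF h_cont] K(2)]
    by (simp add: bij_image_Compl_eq)
  ultimately show ?thesis
    using homeomorphism_symD[OF hom] matches_on_inverse[OF gh assms(2) match]
    unfolding extension_stage_def by blast
qed

lemma extension_stage_extend_domain:
  fixes f :: "'a::euclidean_space \<Rightarrow> 'a"
  assumes dim: "2 \<le> DIM('a)" and dA: "discrete_subset A" and dB: "discrete_subset B"
    and bij: "bij_betw f A B" and stage: "extension_stage A B f h g K"
  obtains h' g' \<rho> where "extension_stage A B f h' g' (cball 0 \<rho>)" "K \<subseteq> cball 0 \<rho>" "r \<le> \<rho>"
    "\<forall>x\<in>K. h' x = h x"
proof -
  have hom: "homeomorphism UNIV UNIV h g" and K: "compact K" "connected (- K)"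
    and match: "matches_on A B f h K"
    using stage by (auto simp: extension_stage_def)
  have gh: "\<And>x. g (h x) = x" and hg: "\<And>y. h (g y) = y"
    using hom by (auto simp: homeomorphism_def)
  obtain b where "\<forall>x\<in>K. norm x \<le> b"
    using compact_imp_bounded[OF K(1)] by (auto simp: bounded_pos)
  then obtain \<rho> where \<rho>: "r \<le> \<rho>" "K \<subseteq> cball 0 \<rho>"
    by (metis max.cobounded1 max.cobounded2 mem_cball_0 order_trans subsetI)
  have "matches_on A (g ` B) (g \<circ> f) id K"
    using match matches_on_comp_iff[OF gh hg, of A B f id K] by simp
  moreover have "discrete_subset (g ` B)"
    using discrete_subset_homeomorphic_image[OF dB homeomorphism_symD[OF hom]] .
  moreover have "inj_on (g \<circ> f) A"
    using bij hg by (simp add: bij_betw_def inj_on_def) metis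
  moreover have "(g \<circ> f) ` A \<subseteq> g ` B"
    using bij by (auto simp: bij_betw_def)
  ultimately obtain \<psi> \<psi>' where \<psi>: "homeomorphism UNIV UNIV \<psi> \<psi>'" "\<forall>x\<in>K. \<psi> x = x"
    "matches_on A (g ` B) (g \<circ> f) \<psi> (cball 0 \<rho>)"
    using matches_on_extend_to_cball[OF dim dA, of "g ` B" "g \<circ> f" K \<rho>] K \<rho>(2) by blast
  have "matches_on A B f (h \<circ> \<psi>) (cball 0 \<rho>)"
    using \<psi>(3) matches_on_comp_iff[OF gh hg] by blast
  then have "extension_stage A B f (h \<circ> \<psi>) (\<psi>' \<circ> g) (cball 0 \<rho>)"
    using homeomorphism_compose[OF \<psi>(1) hom] dim
    by (simp add: extension_stage_def connected_complement_bounded_convex)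
  then show thesis
    using that \<rho> \<psi>(2) by simp
qed

lemma extension_stage_extend:
  fixes f :: "'a::euclidean_space \<Rightarrow> 'a"
  assumes dim: "2 \<le> DIM('a)" and dA: "discrete_subset A" and dB: "discrete_subset B"
    and bij: "bij_betw f A B" and stage: "extension_stage A B f h g K"
  obtains h' g' K' where "extension_stage A B f h' g' K'" "K \<subseteq> K'" "cball 0 r \<subseteq> K'"
    "cball 0 r \<subseteq> h' ` K'" "\<forall>x\<in>K. h' x = h x"
proof -
  obtain h1 g1 \<rho> where s1: "extension_stage A B f h1 g1 (cball 0 \<rho>)" "K \<subseteq> cball 0 \<rho>" "r \<le> \<rho>"
    "\<forall>x\<in>K. h1 x = h x"
    using extension_stage_extend_domain[OF dim dA dB bij stage] by blast
  have bij': "bij_betw (inv_into A f) B A"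
    using bij by (rule bij_betw_inv_into)
  obtain g2 h2 \<tau> where s2: "extension_stage B A (inv_into A f) g2 h2 (cball 0 \<tau>)"
    "h1 ` cball 0 \<rho> \<subseteq> cball 0 \<tau>" "r \<le> \<tau>" "\<forall>y\<in>h1 ` cball 0 \<rho>. g2 y = g1 y"
    using extension_stage_extend_domain[OF dim dB dA bij' extension_stage_inverse[OF s1(1) bij]]
    by blast
  have stage': "extension_stage A B f h2 g2 (g2 ` cball 0 \<tau>)"
    using extension_stage_inverse[OF s2(1) bij'] inv_into_inv_into_eq[OF bij]
    by (simp add: extension_stage_def matches_on_def)
  have gh1: "\<And>x. g1 (h1 x) = x" and hg2: "\<And>y. h2 (g2 y) = y"
    using s1(1) s2(1) by (auto simp: extension_stage_def homeomorphism_def)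
  have g2_h1: "g2 (h1 x) = x" if "x \<in> cball 0 \<rho>" for x
    using s2(4) gh1 that by simp
  have domain: "cball 0 \<rho> \<subseteq> g2 ` cball 0 \<tau>"
  proof
    fix x :: 'a assume "x \<in> cball 0 \<rho>"
    then show "x \<in> g2 ` cball 0 \<tau>"
      using g2_h1 s2(2) by (metis image_eqI image_subset_iff)
  qed
  have "h2 x = h x" if "x \<in> K" for x
    using g2_h1 hg2 s1(2,4) that by (metis subsetD)
  moreover have "h2 ` g2 ` cball 0 \<tau> = cball 0 \<tau>"
    using hg2 by (simp add: image_comp)
  moreover have "cball 0 r \<subseteq> cball 0 \<rho>" "cball 0 r \<subseteq> cball 0 \<tau>"
    using s1(3) s2(3) by (simp_all add: subset_cball)
  ultimately show thesis
    using that[OF stage'] domain s1(2) by blast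
qed

lemma exists_exhausting_extension_stages:
  fixes f :: "'a::euclidean_space \<Rightarrow> 'a"
  assumes dim: "2 \<le> DIM('a)" and dA: "discrete_subset A" and dB: "discrete_subset B"
    and bij: "bij_betw f A B"
  obtains hh gg :: "nat \<Rightarrow> 'a \<Rightarrow> 'a" and KK where
    "\<And>k. extension_stage A B f (hh k) (gg k) (KK k)"
    "\<And>k. KK k \<subseteq> KK (Suc k)" "\<And>k x. x \<in> KK k \<Longrightarrow> hh (Suc k) x = hh k x"
    "\<And>k. cball 0 (real k) \<subseteq> KK k" "\<And>k. cball 0 (real k) \<subseteq> hh k ` KK k"
proof -
  define P :: "nat \<Rightarrow> ('a \<Rightarrow> 'a) \<times> ('a \<Rightarrow> 'a) \<times> 'a set \<Rightarrow> bool"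
    where "P n = (\<lambda>(h, g, K). extension_stage A B f h g K
      \<and> cball 0 (real n) \<subseteq> K \<and> cball 0 (real n) \<subseteq> h ` K)" for n
  define Q :: "('a \<Rightarrow> 'a) \<times> ('a \<Rightarrow> 'a) \<times> 'a set \<Rightarrow> ('a \<Rightarrow> 'a) \<times> ('a \<Rightarrow> 'a) \<times> 'a set \<Rightarrow> bool"
    where "Q = (\<lambda>(h, g, K) (h', g', K'). K \<subseteq> K' \<and> (\<forall>x\<in>K. h' x = h x))"
  have "homeomorphism UNIV UNIV id id"
    using homeomorphism_ident[folded id_def] .
  then have "extension_stage A B f id id {}"
    by (simp add: extension_stage_def matches_on_def connected_UNIV)
  then obtain h0 g0 K0 where "extension_stage A B f h0 g0 K0" "cball 0 0 \<subseteq> K0"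
    "cball 0 0 \<subseteq> h0 ` K0"
    by (rule extension_stage_extend[OF dim dA dB bij, where r = 0]) blast
  then have "P 0 (h0, g0, K0)"
    by (simp add: P_def)
  moreover have "\<exists>s'. P (Suc n) s' \<and> Q s s'" if "P n s" for n s
  proof -
    obtain h g K where s: "s = (h, g, K)"
      by (cases s)
    then have "extension_stage A B f h g K"
      using that by (simp add: P_def)
    then obtain h' g' K' where "extension_stage A B f h' g' K'" "K \<subseteq> K'" "cball 0 (real (Suc n)) \<subseteq> K'"
      "cball 0 (real (Suc n)) \<subseteq> h' ` K'" "\<forall>x\<in>K. h' x = h x"
      by (rule extension_stage_extend[OF dim dA dB bij, where r = "real (Suc n)"]) blast
    then have "P (Suc n) (h', g', K') \<and> Q s (h', g', K')"
      by (simp add: P_def Q_def s)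
    then show ?thesis ..
  qed
  ultimately obtain s where s: "\<And>n. P n (s n) \<and> Q (s n) (s (Suc n))"
    using dependent_nat_choice[of P "\<lambda>_. Q"] by blast
  show thesis
  proof (rule that[of "\<lambda>k. fst (s k)" "\<lambda>k. fst (snd (s k))" "\<lambda>k. snd (snd (s k))"])
    fix k
    obtain h g K h' g' K' where "s k = (h, g, K)" "s (Suc k) = (h', g', K')"
      using prod_cases3 by metis
    then show "extension_stage A B f (fst (s k)) (fst (snd (s k))) (snd (snd (s k)))"
      "cball 0 (real k) \<subseteq> snd (snd (s k))" "cball 0 (real k) \<subseteq> fst (s k) ` snd (snd (s k))"
      "snd (snd (s k)) \<subseteq> snd (snd (s (Suc k)))"
      "\<And>x. x \<in> snd (snd (s k)) \<Longrightarrow> fst (s (Suc k)) x = fst (s k) x"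
      using s[of k] by (simp_all add: P_def Q_def)
  qed
qed

lemma mem_exhaustion_ceiling_norm:
  fixes x :: "'a::real_normed_vector"
  assumes "\<And>k. cball 0 (real k) \<subseteq> KK k"
  shows "x \<in> KK (nat \<lceil>norm x\<rceil>)"
  using assms[of "nat \<lceil>norm x\<rceil>"] real_nat_ceiling_ge[of "norm x"] by auto

lemma continuous_limit_of_exhaustion:
  fixes F :: "nat \<Rightarrow> 'a::real_normed_vector \<Rightarrow> 'b::topological_space"
  assumes cont: "\<And>k. continuous_on UNIV (F k)"
    and mono: "\<And>k. KK k \<subseteq> KK (Suc k)" and agree: "\<And>k x. x \<in> KK k \<Longrightarrow> F (Suc k) x = F k x"
    and exhaust: "\<And>k. cball 0 (real k) \<subseteq> KK k"
  obtains L where "continuous_on UNIV L" "\<And>k x. x \<in> KK k \<Longrightarrow> L x = F k x"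
proof -
  have stable: "KK k \<subseteq> KK m \<and> (\<forall>x\<in>KK k. F m x = F k x)" if "k \<le> m" for k m
    using that
  proof (induction m rule: dec_induct)
    case (step m)
    then show ?case using mono[of m] agree[of _ m] by auto
  qed simp
  define N where "N x = nat \<lceil>norm x\<rceil>" for x :: 'a
  have in_N: "x \<in> KK (N x)" for x
    unfolding N_def using exhaust by (rule mem_exhaustion_ceiling_norm)
  define L where "L x = F (N x) x" for x
  have L_eq: "L x = F k x" if "x \<in> KK k" for k x
    using stable[of k "max k (N x)"] stable[of "N x" "max k (N x)"] in_N that
    by (auto simp: L_def)
  have "continuous_on (ball 0 (real k)) L" for k
    using continuous_on_subset[OF cont[of k]] L_eq exhaust[of k]
    by (metis ball_subset_cball continuous_on_cong subset_UNIV subsetD)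
  moreover have "(\<Union>k. ball 0 (real k)) = (UNIV :: 'a set)"
    by (auto simp: dist_norm) (meson reals_Archimedean2)
  ultimately have "continuous_on UNIV L"
    by (metis continuous_on_open_UN open_ball)
  then show thesis
    using that L_eq by blast
qed

lemma homeomorphism_limit_of_exhaustion:
  fixes hh gg :: "nat \<Rightarrow> 'a::real_normed_vector \<Rightarrow> 'a"
  assumes hom: "\<And>k. homeomorphism UNIV UNIV (hh k) (gg k)"
    and mono: "\<And>k. KK k \<subseteq> KK (Suc k)" and agree: "\<And>k x. x \<in> KK k \<Longrightarrow> hh (Suc k) x = hh k x"
    and exhaust: "\<And>k. cball 0 (real k) \<subseteq> KK k" "\<And>k. cball 0 (real k) \<subseteq> hh k ` KK k"
  obtains H G where "homeomorphism UNIV UNIV H G" "\<And>k x. x \<in> KK k \<Longrightarrow> H x = hh k x"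
proof -
  have gh: "gg k (hh k x) = x"
    and cont: "continuous_on UNIV (hh k)" "continuous_on UNIV (gg k)" for k x
    using hom[of k] by (auto simp: homeomorphism_def)
  obtain H where H: "continuous_on UNIV H" "\<And>k x. x \<in> KK k \<Longrightarrow> H x = hh k x"
    using continuous_limit_of_exhaustion[of hh KK, OF cont(1) mono agree exhaust(1)] by blast
  have image_mono: "hh k ` KK k \<subseteq> hh (Suc k) ` KK (Suc k)" for k
  proof
    fix y assume "y \<in> hh k ` KK k"
    then obtain x where "x \<in> KK k" "y = hh k x" by blast
    then show "y \<in> hh (Suc k) ` KK (Suc k)"
      using mono agree by (metis image_eqI subsetD)
  qed
  have image_agree: "gg (Suc k) y = gg k y" if y: "y \<in> hh k ` KK k" for k y
  proof -
    obtain x where "x \<in> KK k" "y = hh k x"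
      using y by blast
    then show ?thesis
      using agree gh by metis
  qed
  obtain G where G: "continuous_on UNIV G" "\<And>k y. y \<in> hh k ` KK k \<Longrightarrow> G y = gg k y"
    using continuous_limit_of_exhaustion[of gg "\<lambda>k. hh k ` KK k",
        OF cont(2) image_mono image_agree exhaust(2)] by blast
  have "G (H x) = x" for x
    using mem_exhaustion_ceiling_norm[of KK, OF exhaust(1)] H(2) G(2) gh by (metis imageI)
  moreover have "H (G y) = y" for y
  proof -
    obtain x where "x \<in> KK (nat \<lceil>norm y\<rceil>)" "y = hh (nat \<lceil>norm y\<rceil>) x"
      using mem_exhaustion_ceiling_norm[of "\<lambda>k. hh k ` KK k", OF exhaust(2)] by blast
    then show ?thesis
      using H(2) G(2) gh by (metis imageI)
  qed
  ultimately have "homeomorphism UNIV UNIV H G"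
    using H(1) G(1) by (intro homeomorphismI) auto
  then show thesis
    using that H(2) by blast
qed

theorem strongly_discrete_homogeneous_euclidean:
  assumes "2 \<le> DIM('a::euclidean_space)"
  shows "strongly_discrete_homogeneous TYPE('a)"
  unfolding strongly_discrete_homogeneous_def
proof (intro allI impI, elim conjE)
  fix A B :: "'a set" and f
  assume "discrete_subset A" "discrete_subset B" "bij_betw f A B"
  then obtain hh gg :: "nat \<Rightarrow> 'a \<Rightarrow> 'a" and KK where stages:
    "\<And>k. extension_stage A B f (hh k) (gg k) (KK k)"
    "\<And>k. KK k \<subseteq> KK (Suc k)" "\<And>k x. x \<in> KK k \<Longrightarrow> hh (Suc k) x = hh k x"
    "\<And>k. cball 0 (real k) \<subseteq> KK k" "\<And>k. cball 0 (real k) \<subseteq> hh k ` KK k"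
    using exists_exhausting_extension_stages[OF assms] by metis
  have "homeomorphism UNIV UNIV (hh k) (gg k)" for k
    using stages(1) by (simp add: extension_stage_def)
  then obtain H G where H: "homeomorphism UNIV UNIV H G" "\<And>k x. x \<in> KK k \<Longrightarrow> H x = hh k x"
    using homeomorphism_limit_of_exhaustion[of hh gg KK, OF _ stages(2-5)] by blast
  have "H x = f x" if "x \<in> A" for x
  proof -
    have "x \<in> KK (nat \<lceil>norm x\<rceil>)"
      using stages(4) by (rule mem_exhaustion_ceiling_norm)
    then show ?thesis
      using stages(1)[of "nat \<lceil>norm x\<rceil>"] H(2) that
      by (simp add: extension_stage_def matches_on_def)
  qed
  then show "\<exists>h g. homeomorphism UNIV UNIV h g \<and> (\<forall>x\<in>A. h x = f x)"
    using H(1) by blast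
qed

theorem mainTheorem9:
  assumes "CARD('n::finite) > 2"
  shows "strongly_discrete_homogeneous TYPE(real^'n)"
  using assms by (intro strongly_discrete_homogeneous_euclidean) simp

end
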